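(* For $q\ge 1$, the bivariate generating function $W_q(x,y)=\sum_{n,k\ge0}w_{n,k}x^ny^k$, where $w_{n,k}$ is the number of $q$-decreasing binary words of length $n$ containing exactly $k$ letters $1$, is $$W_q(x,y)=\frac{1-x^{q+1}y^q}{1-xy-x+x^{q+2}y^{q+1}}.$$
   Context: For $q\ge1$, a binary word is $q$-decreasing if for every maximal run of $0$s, of length $a>0$, together with the (possibly empty) maximal run of $1$s immediately following it, of length $b$, one has $q\cdot a>b$. The empty word counts as the unique word of length $0$. *)

theory Defs
  imports "HOL-Computational_Algebra.Formal_Power_Series"
begin

text \<open>Binary words are lists of booleans: False is the letter 0, True the letter 1.\<close>

definition zero_run_start :: "bool list \<Rightarrow> nat \<Rightarrow> bool" where
  "zero_run_start w i \<longleftrightarrow> i < length w \<and> \<not> w ! i \<and> (i = 0 \<or> w ! (i - 1))"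

definition q_decreasing :: "nat \<Rightarrow> bool list \<Rightarrow> bool" where
  "q_decreasing q w \<longleftrightarrow>
     (\<forall>i. zero_run_start w i \<longrightarrow>
        (let a = length (takeWhile (\<lambda>c. \<not> c) (drop i w));
             b = length (takeWhile (\<lambda>c. c) (drop (i + a) w))
         in q * a > b))"

definition w_count :: "nat \<Rightarrow> nat \<Rightarrow> nat \<Rightarrow> nat" where
  "w_count q n k = card {w :: bool list. length w = n \<and> length (filter (\<lambda>c. c) w) = k
                                         \<and> q_decreasing q w}"

text \<open>Bivariate generating function as a power series in x whose coefficients are
  power series in y.\<close>
definition W_gf :: "nat \<Rightarrow> int fps fps" where
  "W_gf q = Abs_fps (\<lambda>n. Abs_fps (\<lambda>k. int (w_count q n k)))"

abbreviation X_var :: "int fps fps" where "X_var \<equiv> fps_X"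
abbreviation Y_var :: "int fps fps" where "Y_var \<equiv> fps_const fps_X"

end

theory Submission
  imports Defs
begin

(* Cutting a word just before a maximal run of 0s splits the q-decreasing condition into the
   conditions for the two pieces. Hence appending a 0 to a q-decreasing word keeps it q-decreasing
   (q >= 1), whereas appending a 1 fails exactly for the saturated words v 0^a 1^(qa-1), with v
   q-decreasing and either empty or ending in 1. With E the generating function of the words that
   stay q-decreasing when a 1 is appended, this gives W = 1 + xW + xyE, and the saturated words
   have generating function W - E. A saturated word with a > 1 is obtained from the one for a - 1
   by inserting one 0 and q 1s, and the one with a = 1 is 0 1^(q-1) or u 1 0 1^(q-1) with u counted
   by E. So W - E = x^q y^(q-1) + x^(q+1) y^q W, and eliminating E gives the identity. *)

abbreviation ones :: "bool list \<Rightarrow> nat" where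
  "ones w \<equiv> length (filter (\<lambda>c. c) w)"

definition head_block_ok :: "nat \<Rightarrow> bool list \<Rightarrow> bool" where
  "head_block_ok q r \<longleftrightarrow>
     length (takeWhile (\<lambda>c. c) (dropWhile (\<lambda>c. \<not> c) r))
       < q * length (takeWhile (\<lambda>c. \<not> c) r)"

lemma q_decreasing_iff_head_block_ok:
  "q_decreasing q w \<longleftrightarrow>
     (\<forall>i. zero_run_start w i \<longrightarrow> head_block_ok q (drop i w))"
  unfolding q_decreasing_def head_block_ok_def Let_def
  by (simp add: dropWhile_eq_drop add.commute)

lemma head_block_ok_append:
  assumes "True \<in> set r" and "takeWhile (\<lambda>c. c) s = []"
  shows "head_block_ok q (r @ s) \<longleftrightarrow> head_block_ok q r"
proof -
  define d where "d = dropWhile (\<lambda>c. \<not> c) r"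
  have "takeWhile (\<lambda>c. c) (d @ s) = takeWhile (\<lambda>c. c) d"
  proof (cases "False \<in> set d")
    case True
    then show ?thesis by (rule takeWhile_append1) simp
  next
    case False
    then have "\<forall>c\<in>set d. c" by (metis (full_types))
    then show ?thesis
      using assms(2) by (simp add: takeWhile_append takeWhile_eq_all_conv[THEN iffD2])
  qed
  then show ?thesis
    using takeWhile_append1[OF assms(1)] dropWhile_append1[OF assms(1)]
    unfolding head_block_ok_def d_def by simp
qed

lemma zero_run_start_append:
  assumes "u = [] \<or> last u"
  shows "zero_run_start (u @ w) i \<longleftrightarrow>
           (if i < length u then zero_run_start u i else zero_run_start w (i - length u))"
proof -
  consider "i < length u" | "i = length u" | "length u < i" by linarith
  then show ?thesis
  proof cases
    case 1
    then show ?thesis by (simp add: zero_run_start_def nth_append less_imp_diff_less)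
  next
    case 2
    then show ?thesis
      using assms by (cases "u = []") (simp_all add: zero_run_start_def nth_append last_conv_nth)
  next
    case 3
    then have "\<not> i - 1 < length u" by linarith
    with 3 show ?thesis by (auto simp: zero_run_start_def nth_append)
  qed
qed

lemma q_decreasing_append:
  assumes "u = [] \<or> last u" and "takeWhile (\<lambda>c. c) w = []"
  shows "q_decreasing q (u @ w) \<longleftrightarrow> q_decreasing q u \<and> q_decreasing q w"
proof -
  let ?P = "\<lambda>i. zero_run_start (u @ w) i \<longrightarrow> head_block_ok q (drop i (u @ w))"
  have left: "?P i \<longleftrightarrow> (zero_run_start u i \<longrightarrow> head_block_ok q (drop i u))"
    if "i < length u" for i
  proof -
    have "True \<in> set (drop i u)"
      using that assms(1) last_in_set[of "drop i u"] by auto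
    then show ?thesis
      using that head_block_ok_append[OF _ assms(2)] zero_run_start_append[OF assms(1)] by simp
  qed
  have right: "?P (length u + j) \<longleftrightarrow> (zero_run_start w j \<longrightarrow> head_block_ok q (drop j w))" for j
    using zero_run_start_append[OF assms(1)] by simp
  have "(\<forall>i. ?P i) \<longleftrightarrow> (\<forall>i<length u. ?P i) \<and> (\<forall>j. ?P (length u + j))"
    by (metis add_diff_inverse_nat)
  moreover have "(\<forall>i<length u. ?P i) \<longleftrightarrow> q_decreasing q u"
    unfolding q_decreasing_iff_head_block_ok using left by (auto simp: zero_run_start_def)
  ultimately show ?thesis
    unfolding q_decreasing_iff_head_block_ok[of q "u @ w"] q_decreasing_iff_head_block_ok[of q w]
    using right by simp
qed

lemma q_decreasing_replicate_True: "q_decreasing q (replicate c True)"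
  by (simp add: q_decreasing_def zero_run_start_def)

lemma q_decreasing_Nil: "q_decreasing q []"
  using q_decreasing_replicate_True[of q 0] by simp

lemma q_decreasing_block:
  assumes "0 < a"
  shows "q_decreasing q (replicate a False @ replicate b True) \<longleftrightarrow> b < q * a"
proof -
  have "zero_run_start (replicate a False @ replicate b True) i \<longleftrightarrow> i = 0" for i
    using assms by (auto simp: zero_run_start_def nth_append)
  then show ?thesis
    using assms
    by (simp add: q_decreasing_iff_head_block_ok head_block_ok_def takeWhile_append dropWhile_append)
qed

corollary q_decreasing_append_block:
  assumes "v = [] \<or> last v" and "0 < a"
  shows "q_decreasing q (v @ replicate a False @ replicate b True)
           \<longleftrightarrow> q_decreasing q v \<and> b < q * a"
proof -
  have "takeWhile (\<lambda>c. c) (replicate a False @ replicate b True) = []"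
    using assms(2) by (cases a) simp_all
  then show ?thesis
    using q_decreasing_append[OF assms(1)] q_decreasing_block[OF assms(2)] by simp
qed

lemma last_block_cases:
  obtains (all_ones) c where "u = replicate c True"
  | (block) v a b where "v = [] \<or> last v" "0 < a" "u = v @ replicate a False @ replicate b True"
proof (induction u arbitrary: thesis rule: rev_induct)
  case Nil
  then show ?case by (metis replicate_0)
next
  case (snoc x u)
  have new_block: thesis if "u = [] \<or> last u" and "\<not> x"
    using snoc.prems(2)[of u 1 0] that by simp
  show ?case
  proof (rule snoc.IH)
    fix c
    assume u: "u = replicate c True"
    show thesis
    proof (cases x)
      case True
      then show ?thesis using snoc.prems(1)[of "Suc c"] u by (simp add: replicate_append_same)
    next
      case False
      then show ?thesis using new_block u by (cases c) auto
    qed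
  next
    fix v a b
    assume v: "v = [] \<or> last v" "0 < a" and u: "u = v @ replicate a False @ replicate b True"
    consider "x" | "\<not> x" "b = 0" | "\<not> x" "0 < b" by blast
    then show thesis
    proof cases
      case 1
      then show ?thesis
        using snoc.prems(2)[OF v, of "Suc b"] u by (simp add: replicate_append_same)
    next
      case 2
      then show ?thesis
        using snoc.prems(2)[of v "Suc a" 0] v u by (simp add: replicate_append_same)
    next
      case 3
      then show ?thesis using new_block u by simp
    qed
  qed
qed

lemma last_block_unique:
  assumes "v = [] \<or> last v" "v' = [] \<or> last v'" "0 < a" "0 < a'"
    and "v @ replicate a False @ replicate b True = v' @ replicate a' False @ replicate b' True"
  shows "v = v' \<and> a = a' \<and> b = b'"
proof -
  have rev_eq: "replicate b True @ replicate a False @ rev v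
      = replicate b' True @ replicate a' False @ rev v'"
    using arg_cong[OF assms(5), of rev] by simp
  have leading_ones:
    "takeWhile (\<lambda>c. c) (replicate b True @ replicate a False @ rev v) = replicate b True"
    if "0 < a" for a b v
    using that by (simp add: takeWhile_append)
  have leading_zeros: "takeWhile (\<lambda>c. \<not> c) (replicate a False @ rev v) = replicate a False"
    if "v = [] \<or> last v" for a v
    using that by (cases v rule: rev_cases) (simp_all add: takeWhile_append)
  have "b = b'"
    using arg_cong[OF rev_eq, of "takeWhile (\<lambda>c. c)"]
      leading_ones[OF assms(3)] leading_ones[OF assms(4)] by simp
  moreover from this have "replicate a False @ rev v = replicate a' False @ rev v'"
    using rev_eq by simp
  moreover from this have "a = a'"
    using arg_cong[of _ _ "takeWhile (\<lambda>c. \<not> c)"]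
      leading_zeros[OF assms(1)] leading_zeros[OF assms(2)] by (metis length_replicate)
  ultimately show ?thesis by simp
qed

lemma q_decreasing_snoc_False:
  assumes "0 < q"
  shows "q_decreasing q (u @ [False]) \<longleftrightarrow> q_decreasing q u"
proof -
  have ends_in_one: ?thesis if "u = [] \<or> last u"
    using q_decreasing_append_block[OF that, of 1 q 0] assms by simp
  show ?thesis
  proof (cases u rule: last_block_cases)
    case (all_ones c)
    then show ?thesis using ends_in_one by (cases c) auto
  next
    case (block v a b)
    show ?thesis
    proof (cases b)
      case 0
      then have "u @ [False] = v @ replicate (Suc a) False @ replicate 0 True"
        using block by (simp add: replicate_append_same)
      then show ?thesis
        using block 0 assms q_decreasing_append_block[OF block(1), of "Suc a" q 0]
          q_decreasing_append_block[OF block(1,2), of q 0] by simp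
    next
      case (Suc b')
      then show ?thesis using ends_in_one block by simp
    qed
  qed
qed

lemma q_decreasing_snoc_TrueD:
  assumes "q_decreasing q (u @ [True])"
  shows "q_decreasing q u"
proof (cases u rule: last_block_cases)
  case (all_ones c)
  then show ?thesis by (simp add: q_decreasing_replicate_True)
next
  case (block v a b)
  then have "u @ [True] = v @ replicate a False @ replicate (Suc b) True"
    by (simp add: replicate_append_same)
  then show ?thesis
    using assms block q_decreasing_append_block[OF block(1,2), of q "Suc b"]
      q_decreasing_append_block[OF block(1,2), of q b] by simp
qed

definition saturated_word :: "nat \<Rightarrow> bool list \<times> nat \<Rightarrow> bool list" where
  "saturated_word q = (\<lambda>(v, a). v @ replicate a False @ replicate (q * a - 1) True)"

definition saturated_word_params :: "nat \<Rightarrow> (bool list \<times> nat) set" where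
  "saturated_word_params q = {(v, a). (v = [] \<or> last v) \<and> q_decreasing q v \<and> 0 < a}"

lemma saturated_words_eq:
  assumes "0 < q"
  shows "{u. q_decreasing q u \<and> \<not> q_decreasing q (u @ [True])}
           = saturated_word q ` saturated_word_params q"
proof (intro equalityI subsetI)
  fix u
  assume "u \<in> {u. q_decreasing q u \<and> \<not> q_decreasing q (u @ [True])}"
  then have u: "q_decreasing q u" "\<not> q_decreasing q (u @ [True])" by simp_all
  show "u \<in> saturated_word q ` saturated_word_params q"
  proof (cases u rule: last_block_cases)
    case (all_ones c)
    then show ?thesis
      using u(2) q_decreasing_replicate_True[of q "Suc c"] by (simp add: replicate_append_same)
  next
    case (block v a b)
    then have "u @ [True] = v @ replicate a False @ replicate (Suc b) True"
      by (simp add: replicate_append_same)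
    then have "q_decreasing q v" "b = q * a - 1"
      using u block q_decreasing_append_block[OF block(1,2), of q "Suc b"]
        q_decreasing_append_block[OF block(1,2), of q b] by auto
    then show ?thesis
      using block unfolding saturated_word_def saturated_word_params_def by force
  qed
next
  fix u
  assume "u \<in> saturated_word q ` saturated_word_params q"
  then obtain v a where v: "v = [] \<or> last v" "q_decreasing q v" "0 < a"
    and u: "u = v @ replicate a False @ replicate (q * a - 1) True"
    unfolding saturated_word_def saturated_word_params_def by auto
  have "0 < q * a" using assms v(3) by simp
  then have "u @ [True] = v @ replicate a False @ replicate (q * a) True"
    using u by (metis Suc_diff_1 append.assoc replicate_Suc replicate_append_same)
  then show "u \<in> {u. q_decreasing q u \<and> \<not> q_decreasing q (u @ [True])}"
    using u v \<open>0 < q * a\<close> q_decreasing_append_block[OF v(1,3), of q "q * a"]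
      q_decreasing_append_block[OF v(1,3), of q "q * a - 1"] by simp
qed

lemma inj_on_saturated_word: "inj_on (saturated_word q) (saturated_word_params q)"
proof (rule inj_onI)
  fix x y
  assume x: "x \<in> saturated_word_params q" and y: "y \<in> saturated_word_params q"
    and eq: "saturated_word q x = saturated_word q y"
  obtain v a v' a' where "x = (v, a)" "y = (v', a')" by fastforce
  with x y eq show "x = y"
    using last_block_unique[of v v' a a' "q * a - 1" "q * a' - 1"]
    unfolding saturated_word_def saturated_word_params_def by auto
qed

lemma saturated_word_params_unfold:
  "saturated_word_params q =
     {([], 1)} \<union> (\<lambda>u. (u @ [True], 1)) ` {u. q_decreasing q (u @ [True])}
       \<union> (\<lambda>(v, a). (v, Suc a)) ` saturated_word_params q"
  (is "_ = ?R")
proof (intro equalityI subsetI)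
  fix p
  assume "p \<in> saturated_word_params q"
  then obtain v a where va: "p = (v, a)" "v = [] \<or> last v" "q_decreasing q v" "0 < a"
    unfolding saturated_word_params_def by auto
  consider "a = 1" "v = []" | "a = 1" "v \<noteq> []" | "1 < a" using va(4) by linarith
  then show "p \<in> ?R"
  proof cases
    case 1
    then show ?thesis using va by simp
  next
    case 2
    then obtain u where "v = u @ [True]" using va(2) by (metis append_butlast_last_id)
    then show ?thesis using 2 va by blast
  next
    case 3
    then have "(v, a - 1) \<in> saturated_word_params q"
      using va unfolding saturated_word_params_def by simp
    then show ?thesis using va 3 by (auto intro!: image_eqI[of _ _ "(v, a - 1)"])
  qed
next
  fix p
  assume "p \<in> ?R"
  then show "p \<in> saturated_word_params q"
    unfolding saturated_word_params_def by (auto simp: q_decreasing_Nil)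
qed

definition word_gf :: "bool list set \<Rightarrow> int fps fps" where
  "word_gf A = Abs_fps (\<lambda>n. Abs_fps (\<lambda>k. int (card {w \<in> A. length w = n \<and> ones w = k})))"

lemma word_gf_nth:
  "fps_nth (fps_nth (word_gf A) n) k = int (card {w \<in> A. length w = n \<and> ones w = k})"
  by (simp add: word_gf_def)

lemma finite_words_of_length: "finite {w :: bool list. length w = n \<and> P w}"
  using finite_lists_length_eq[of "UNIV :: bool set" n] by (rule finite_subset[rotated]) auto

lemma word_gf_Un_disjoint:
  assumes "A \<inter> B = {}"
  shows "word_gf (A \<union> B) = word_gf A + word_gf B"
proof (intro fps_ext)
  fix n k
  let ?slice = "\<lambda>A. {w \<in> A. length w = n \<and> ones w = k}"
  have "?slice (A \<union> B) = ?slice A \<union> ?slice B" by auto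
  moreover have "finite (?slice A)" "finite (?slice B)"
    using finite_words_of_length by simp_all
  ultimately have "card (?slice (A \<union> B)) = card (?slice A) + card (?slice B)"
    using assms by (simp add: card_Un_disjoint disjoint_iff)
  then show "fps_nth (fps_nth (word_gf (A \<union> B)) n) k
      = fps_nth (fps_nth (word_gf A + word_gf B) n) k"
    by (simp add: word_gf_nth)
qed

lemma word_gf_empty: "word_gf {} = 0"
  by (intro fps_ext) (simp add: word_gf_nth)

lemma word_gf_Nil: "word_gf {[]} = 1"
proof (intro fps_ext)
  fix n k
  have "{w \<in> {[]}. length w = n \<and> ones w = k} = (if n = 0 \<and> k = 0 then {[]} else {})"
    by auto
  then show "fps_nth (fps_nth (word_gf {[]}) n) k = fps_nth (fps_nth 1 n) k"
    by (simp add: word_gf_nth)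
qed

lemma X_power_Y_power_mult_nth:
  fixes F :: "int fps fps"
  shows "fps_nth (fps_nth (X_var ^ c * Y_var ^ d * F) n) k
    = (if n < c \<or> k < d then 0 else fps_nth (fps_nth F (n - c)) (k - d))"
  by (simp add: mult.assoc fps_X_power_mult_nth)

lemma word_gf_image_shift:
  assumes "inj_on f A" and "inj_on g A"
    and "\<And>x. x \<in> A \<Longrightarrow> length (f x) = length (g x) + c \<and> ones (f x) = ones (g x) + d"
  shows "word_gf (f ` A) = X_var ^ c * Y_var ^ d * word_gf (g ` A)"
proof (intro fps_ext)
  fix n k
  have slice: "card {w \<in> h ` A. length w = n \<and> ones w = k}
      = card {x \<in> A. length (h x) = n \<and> ones (h x) = k}"
    if "inj_on h A" for h n k
  proof -
    have "{w \<in> h ` A. length w = n \<and> ones w = k}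
        = h ` {x \<in> A. length (h x) = n \<and> ones (h x) = k}" by auto
    then show ?thesis
      using that by (simp add: card_image inj_on_subset)
  qed
  have "{x \<in> A. length (f x) = n \<and> ones (f x) = k}
      = (if n < c \<or> k < d then {}
         else {x \<in> A. length (g x) = n - c \<and> ones (g x) = k - d})"
    using assms(3) by auto
  then show "fps_nth (fps_nth (word_gf (f ` A)) n) k
      = fps_nth (fps_nth (X_var ^ c * Y_var ^ d * word_gf (g ` A)) n) k"
    unfolding X_power_Y_power_mult_nth word_gf_nth slice[OF assms(1)] slice[OF assms(2)]
    by simp
qed

lemma word_gf_singleton: "word_gf {w} = X_var ^ length w * Y_var ^ ones w"
  using word_gf_image_shift[of "\<lambda>_. w" "{[]}" "\<lambda>u. u" "length w" "ones w"]
  by (simp add: word_gf_Nil)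

lemma word_gf_snoc:
  "word_gf A = (if [] \<in> A then 1 else 0) + X_var * word_gf {u. u @ [False] \<in> A}
                 + X_var * Y_var * word_gf {u. u @ [True] \<in> A}"
proof -
  let ?F = "{u. u @ [False] \<in> A}" and ?T = "{u. u @ [True] \<in> A}"
  let ?N = "{[]} \<inter> A"
  let ?FA = "(\<lambda>u. u @ [False]) ` ?F" and ?TA = "(\<lambda>u. u @ [True]) ` ?T"
  have decomp: "A = ?N \<union> ?FA \<union> ?TA"
  proof (intro equalityI subsetI)
    fix w
    assume w: "w \<in> A"
    show "w \<in> ?N \<union> ?FA \<union> ?TA"
    proof (cases w rule: rev_cases)
      case Nil
      then show ?thesis using w by simp
    next
      case (snoc u x)
      show ?thesis
      proof (cases x)
        case True
        with snoc w have "w = u @ [True]" "u \<in> ?T" by simp_all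
        then show ?thesis by blast
      next
        case False
        with snoc w have "w = u @ [False]" "u \<in> ?F" by simp_all
        then show ?thesis by blast
      qed
    qed
  qed auto
  have "word_gf A = word_gf (?N \<union> ?FA \<union> ?TA)"
    using decomp by (rule arg_cong)
  also have "\<dots> = word_gf ?N + word_gf ?FA + word_gf ?TA"
  proof -
    have "?N \<inter> ?FA = {}" "(?N \<union> ?FA) \<inter> ?TA = {}" by auto
    then show ?thesis by (simp only: word_gf_Un_disjoint)
  qed
  also have "word_gf ?N = (if [] \<in> A then 1 else 0)"
    by (simp add: word_gf_Nil word_gf_empty)
  also have "word_gf ?FA = X_var * word_gf ?F"
    using word_gf_image_shift[of "\<lambda>u. u @ [False]" ?F "\<lambda>u. u" 1 0]
    by (simp add: inj_on_def)
  also have "word_gf ?TA = X_var * Y_var * word_gf ?T"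
    using word_gf_image_shift[of "\<lambda>u. u @ [True]" ?T "\<lambda>u. u" 1 1]
    by (simp add: inj_on_def)
  finally show ?thesis .
qed

lemma W_gf_eq_word_gf: "W_gf q = word_gf {w. q_decreasing q w}"
  unfolding W_gf_def w_count_def word_gf_def by (simp add: conj_ac)

lemma word_gf_q_decreasing_snoc:
  assumes "0 < q"
  shows "word_gf {w. q_decreasing q w}
           = 1 + X_var * word_gf {w. q_decreasing q w}
               + X_var * Y_var * word_gf {u. q_decreasing q (u @ [True])}"
  using word_gf_snoc[of "{w. q_decreasing q w}"]
  by (simp add: q_decreasing_Nil q_decreasing_snoc_False[OF assms])

lemma word_gf_q_decreasing_split:
  "word_gf {w. q_decreasing q w}
     = word_gf {u. q_decreasing q (u @ [True])}
         + word_gf {u. q_decreasing q u \<and> \<not> q_decreasing q (u @ [True])}"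
proof -
  have "{w. q_decreasing q w}
      = {u. q_decreasing q (u @ [True])}
          \<union> {u. q_decreasing q u \<and> \<not> q_decreasing q (u @ [True])}"
    using q_decreasing_snoc_TrueD by blast
  then show ?thesis by (simp add: word_gf_Un_disjoint[symmetric] disjoint_iff)
qed

lemma word_gf_saturated_word_params:
  assumes "0 < q"
  shows "word_gf (saturated_word q ` saturated_word_params q)
           = X_var ^ q * Y_var ^ (q - 1)
             + X_var ^ (q + 1) * Y_var ^ q * word_gf {u. q_decreasing q (u @ [True])}
             + X_var ^ (q + 1) * Y_var ^ q * word_gf (saturated_word q ` saturated_word_params q)"
proof -
  let ?s = "saturated_word q" and ?P = "saturated_word_params q"
  let ?E = "{u. q_decreasing q (u @ [True])}"
  define close where "close = (\<lambda>u :: bool list. (u @ [True], 1 :: nat))"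
  define grow where "grow = (\<lambda>(v, a :: nat). (v :: bool list, Suc a))"
  have P_eq: "?P = {([], 1)} \<union> close ` ?E \<union> grow ` ?P"
    unfolding close_def grow_def by (rule saturated_word_params_unfold)
  have sub: "{([], 1)} \<subseteq> ?P" "close ` ?E \<subseteq> ?P" "grow ` ?P \<subseteq> ?P"
    using P_eq by blast+
  have "{([], 1)} \<inter> close ` ?E = {}" "({([], 1)} \<union> close ` ?E) \<inter> grow ` ?P = {}"
    unfolding close_def grow_def saturated_word_params_def by auto
  then have disj: "?s ` {([], 1)} \<inter> ?s ` close ` ?E = {}"
    "(?s ` {([], 1)} \<union> ?s ` close ` ?E) \<inter> ?s ` grow ` ?P = {}"
    using sub inj_on_image_Int[OF inj_on_saturated_word]
    by (metis image_Un image_empty le_sup_iff)+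
  have "word_gf (?s ` ?P) = word_gf (?s ` {([], 1)} \<union> ?s ` close ` ?E \<union> ?s ` grow ` ?P)"
    using P_eq by (metis image_Un)
  also have "\<dots> = word_gf (?s ` {([], 1)}) + word_gf ((?s \<circ> close) ` ?E)
                    + word_gf ((?s \<circ> grow) ` ?P)"
    using disj by (simp only: word_gf_Un_disjoint image_comp)
  also have "word_gf (?s ` {([], 1)}) = X_var ^ q * Y_var ^ (q - 1)"
    using assms by (simp add: word_gf_singleton saturated_word_def)
  also have "word_gf ((?s \<circ> close) ` ?E) = X_var ^ (q + 1) * Y_var ^ q * word_gf ((\<lambda>u. u) ` ?E)"
  proof (rule word_gf_image_shift)
    show "inj_on (?s \<circ> close) ?E"
      using sub(2) by (intro comp_inj_on inj_on_subset[OF inj_on_saturated_word])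
        (auto simp: close_def inj_on_def)
  qed (use assms in \<open>auto simp: saturated_word_def close_def inj_on_def\<close>)
  also have "word_gf ((?s \<circ> grow) ` ?P) = X_var ^ (q + 1) * Y_var ^ q * word_gf (?s ` ?P)"
  proof (rule word_gf_image_shift)
    show "inj_on (?s \<circ> grow) ?P"
      using sub(3) by (intro comp_inj_on inj_on_subset[OF inj_on_saturated_word])
        (auto simp: grow_def inj_on_def)
    show "inj_on ?s ?P" by (rule inj_on_saturated_word)
  next
    fix x
    assume "x \<in> ?P"
    then obtain v a where "x = (v, a)" "0 < a"
      unfolding saturated_word_params_def by auto
    moreover have "0 < q * a" using assms \<open>0 < a\<close> by simp
    ultimately show "length ((?s \<circ> grow) x) = length (?s x) + (q + 1)
        \<and> ones ((?s \<circ> grow) x) = ones (?s x) + q"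
      by (simp add: saturated_word_def grow_def) (use \<open>0 < q * a\<close> in linarith)
  qed
  finally show ?thesis by simp
qed

lemma word_gf_saturated:
  assumes "0 < q"
  shows "word_gf {u. q_decreasing q u \<and> \<not> q_decreasing q (u @ [True])}
           = X_var ^ q * Y_var ^ (q - 1) + X_var ^ (q + 1) * Y_var ^ q * word_gf {w. q_decreasing q w}"
proof -
  let ?S = "saturated_word q ` saturated_word_params q"
  let ?E = "word_gf {u. q_decreasing q (u @ [True])}"
  have "word_gf {u. q_decreasing q u \<and> \<not> q_decreasing q (u @ [True])} = word_gf ?S"
    by (simp only: saturated_words_eq[OF assms])
  also have "\<dots> = X_var ^ q * Y_var ^ (q - 1) + X_var ^ (q + 1) * Y_var ^ q * (?E + word_gf ?S)"
    using word_gf_saturated_word_params[OF assms] unfolding distrib_left add.assoc .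
  also have "?E + word_gf ?S = word_gf {w. q_decreasing q w}"
    by (simp only: word_gf_q_decreasing_split saturated_words_eq[OF assms])
  finally show ?thesis .
qed

theorem theorem2:
  fixes q :: nat
  assumes "q \<ge> 1"
  shows "W_gf q * (1 - X_var * Y_var - X_var + X_var ^ (q + 2) * Y_var ^ (q + 1))
           = 1 - X_var ^ (q + 1) * Y_var ^ q"
proof -
  obtain p where q: "q = Suc p" using assms by (cases q) auto
  define W where "W = word_gf {w. q_decreasing q w}"
  define E where "E = word_gf {u. q_decreasing q (u @ [True])}"
  have snoc: "W = 1 + X_var * W + X_var * Y_var * E"
    unfolding W_def E_def using word_gf_q_decreasing_snoc assms by simp
  have "W - E = X_var ^ q * Y_var ^ (q - 1) + X_var ^ (q + 1) * Y_var ^ q * W"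
    unfolding W_def E_def using word_gf_q_decreasing_split word_gf_saturated assms by simp
  then have "X_var * Y_var * (W - E)
      = X_var * Y_var * (X_var ^ q * Y_var ^ (q - 1) + X_var ^ (q + 1) * Y_var ^ q * W)" by simp
  also have "\<dots> = X_var ^ (q + 1) * Y_var ^ q + X_var ^ (q + 2) * Y_var ^ (q + 1) * W"
    unfolding q by (simp add: algebra_simps)
  finally have saturated: "X_var * Y_var * (W - E)
      = X_var ^ (q + 1) * Y_var ^ q + X_var ^ (q + 2) * Y_var ^ (q + 1) * W" .
  have "W_gf q * (1 - X_var * Y_var - X_var + X_var ^ (q + 2) * Y_var ^ (q + 1))
      = (W - X_var * W - X_var * Y_var * E)
          - (X_var * Y_var * (W - E) - X_var ^ (q + 2) * Y_var ^ (q + 1) * W)"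
    unfolding W_gf_eq_word_gf W_def[symmetric] by (simp add: algebra_simps)
  also have "\<dots> = 1 - X_var ^ (q + 1) * Y_var ^ q"
    using snoc saturated by (simp add: algebra_simps)
  finally show ?thesis .
qed

end
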